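(* Consider the setting in the context, and let $\mathbf{R}=(R_1,R_2)$ and $\mathbf{R}'=(R_1',R_2')$ be two pairs of payoff matrices. Suppose the modified 4-player game is $\alpha$-strongly monotone (for some $\alpha>0$) for the payoff pair $\mathbf{R}'$ (the strong monotonicity condition does not depend on the payoffs). Let $z^*=(\pi_1^*,\pi_2^*,p_1^*,p_2^* )$ and $z^\dagger=(\pi_1^\dagger,\pi_2^\dagger,p_1^\dagger,p_2^\dagger)$ be Nash equilibria of the modified 4-player game with payoffs $\mathbf{R}$ and $\mathbf{R}'$ respectively. Then $$\|z^*-z^\dagger\|_2\le \frac{2\left(\sqrt{|\mathcal{A}_1|}+\sqrt{|\mathcal{A}_2|}\right)\|\mathbf{R}-\mathbf{R}'\|_\infty}{\alpha},$$ and consequently the corresponding RQEs $\pi^*=(\pi_1^*,\pi_2^* )$ and $\pi^\dagger=(\pi_1^\dagger,\pi_2^\dagger)$ of the original game satisfy $$\|\pi^*-\pi^\dagger\|_2\le \frac{2\left(\sqrt{|\mathcal{A}_1|}+\sqrt{|\mathcal{A}_2|}\right)\|\mathbf{R}-\mathbf{R}'\|_\infty}{\alpha}.$$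
   Context: Two players $i\in\{1,2\}$ have finite action sets $\mathcal{A}_1,\mathcal{A}_2$; $-i$ denotes the other player, $\Delta_n$ the probability simplex in $\mathbb{R}^n$. Payoff matrices $R_1\in\mathbb{R}^{|\mathcal{A}_1|\times|\mathcal{A}_2|}$, $R_2\in\mathbb{R}^{|\mathcal{A}_2|\times|\mathcal{A}_1|}$; $\|\mathbf{R}-\mathbf{R}'\|_\infty$ denotes the largest absolute value of an entry of $R_1-R_1'$ or $R_2-R_2'$. For each $i$ fix $\epsilon_i>0$, a differentiable strictly convex $\nu_i$ (on an open set containing $\Delta_{|\mathcal{A}_i|}$), and a differentiable $D_i:\Delta_{|\mathcal{A}_{-i}|}\times\Delta_{|\mathcal{A}_{-i}|}\to\mathbb{R}$ convex in its first argument. Player $i$ minimizes $f_i(\pi_i,\pi_{-i};R_i)=\sup_{p_i\in\Delta_{|\mathcal{A}_{-i}|}}[-\pi_i^TR_ip_i-D_i(p_i,\pi_{-i})]+\epsilon_i\nu_i(\pi_i)$; an RQE is a pair $(\pi_1^*,\pi_2^* )$ with $f_i(\pi_i^*,\pi_{-i}^*;R_i)\le f_i(\pi_i,\pi_{-i}^*;R_i)$ for all $\pi_i\in\Delta_{|\mathcal{A}_i|}$, $i=1,2$; for a Nash equilibrium $(\pi_1,\pi_2,p_1,p_2)$ of the modified game below, $(\pi_1,\pi_2)$ is its corresponding RQE. The modified 4-player game has joint strategy $z=(\pi_1,\pi_2,p_1,p_2)\in\mathcal{Z}=\Delta_{|\mathcal{A}_1|}\times\Delta_{|\mathcal{A}_2|}\times\Delta_{|\mathcal{A}_2|}\times\Delta_{|\mathcal{A}_1|}$;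 player $\pi_i$ minimizes $J_i(z)=-\pi_i^TR_ip_i-D_i(p_i,\pi_{-i})+\epsilon_i\nu_i(\pi_i)$ over $\pi_i\in\Delta_{|\mathcal{A}_i|}$ and adversary $p_i$ minimizes $\bar J_i(z)=\pi_i^TR_ip_i+D_i(p_i,\pi_{-i})-\epsilon_i\nu_i(\pi_i)$ over $p_i\in\Delta_{|\mathcal{A}_{-i}|}$. Its gradient operator is $F(z;\mathbf{R})=(-R_1p_1+\epsilon_1\nabla\nu_1(\pi_1),\,-R_2p_2+\epsilon_2\nabla\nu_2(\pi_2),\,R_1^T\pi_1+\nabla_{p_1}D_1(p_1,\pi_2),\,R_2^T\pi_2+\nabla_{p_2}D_2(p_2,\pi_1))$. The game is $\alpha$-strongly monotone if $(z-z')^T(F(z;\mathbf{R})-F(z';\mathbf{R}))\ge\alpha\|z-z'\|_2^2$ for all $z,z'\in\mathcal{Z}$; since the payoff terms cancel in this expression, the condition is independent of $\mathbf{R}$. *)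

theory Defs
  imports "HOL-Analysis.Analysis"
begin

definition strict_convex_on :: "'a::real_vector set \<Rightarrow> ('a \<Rightarrow> real) \<Rightarrow> bool" where
  "strict_convex_on S f \<longleftrightarrow> convex S \<and>
     (\<forall>x\<in>S. \<forall>y\<in>S. x \<noteq> y \<longrightarrow> (\<forall>u. 0 < u \<and> u < 1 \<longrightarrow>
        f ((1 - u) *\<^sub>R x + u *\<^sub>R y) < (1 - u) * f x + u * f y))"

definition prob_simplex :: "(real ^ 'n::finite) set" where
  "prob_simplex = {x. (\<forall>i. 0 \<le> x $ i) \<and> (\<Sum>i\<in>UNIV. x $ i) = 1}"

definition maxabs :: "real ^ 'n::finite ^ 'm::finite \<Rightarrow> real" where
  "maxabs A = Max {\<bar>A $ i $ j\<bar> | i j. True}"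

definition payoff_dist ::
  "(real ^ 'a2::finite ^ 'a1::finite) \<times> (real ^ 'a1 ^ 'a2)
   \<Rightarrow> (real ^ 'a2 ^ 'a1) \<times> (real ^ 'a1 ^ 'a2) \<Rightarrow> real" where
  "payoff_dist R R' = max (maxabs (fst R - fst R')) (maxabs (snd R - snd R'))"

definition Zset :: "((real ^ 'a1::finite) \<times> (real ^ 'a2::finite) \<times> (real ^ 'a2) \<times> (real ^ 'a1)) set" where
  "Zset = prob_simplex \<times> prob_simplex \<times> prob_simplex \<times> prob_simplex"

definition J1 where
  "J1 R1 D1 eps1 nu1 = (\<lambda>(\<pi>1, \<pi>2, p1, p2). - (\<pi>1 \<bullet> (R1 *v p1)) - D1 p1 \<pi>2 + eps1 * nu1 \<pi>1)"
definition J2 where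
  "J2 R2 D2 eps2 nu2 = (\<lambda>(\<pi>1, \<pi>2, p1, p2). - (\<pi>2 \<bullet> (R2 *v p2)) - D2 p2 \<pi>1 + eps2 * nu2 \<pi>2)"
definition Jbar1 where
  "Jbar1 R1 D1 eps1 nu1 = (\<lambda>(\<pi>1, \<pi>2, p1, p2). \<pi>1 \<bullet> (R1 *v p1) + D1 p1 \<pi>2 - eps1 * nu1 \<pi>1)"
definition Jbar2 where
  "Jbar2 R2 D2 eps2 nu2 = (\<lambda>(\<pi>1, \<pi>2, p1, p2). \<pi>2 \<bullet> (R2 *v p2) + D2 p2 \<pi>1 - eps2 * nu2 \<pi>2)"

definition modified_NE where
  "modified_NE R D1 D2 eps1 eps2 nu1 nu2 z \<longleftrightarrow>
     (case z of (\<pi>1, \<pi>2, p1, p2) \<Rightarrow>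
       z \<in> Zset \<and>
       (\<forall>x\<in>prob_simplex. J1 (fst R) D1 eps1 nu1 z \<le> J1 (fst R) D1 eps1 nu1 (x, \<pi>2, p1, p2)) \<and>
       (\<forall>x\<in>prob_simplex. J2 (snd R) D2 eps2 nu2 z \<le> J2 (snd R) D2 eps2 nu2 (\<pi>1, x, p1, p2)) \<and>
       (\<forall>x\<in>prob_simplex. Jbar1 (fst R) D1 eps1 nu1 z \<le> Jbar1 (fst R) D1 eps1 nu1 (\<pi>1, \<pi>2, x, p2)) \<and>
       (\<forall>x\<in>prob_simplex. Jbar2 (snd R) D2 eps2 nu2 z \<le> Jbar2 (snd R) D2 eps2 nu2 (\<pi>1, \<pi>2, p1, x)))"

text \<open>Gradient operator \<open>F(z;R)\<close>; \<open>g1,g2\<close> are the gradients of \<open>\<nu>1,\<nu>2\<close> and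
  \<open>dD1,dD2\<close> the gradients of \<open>D1,D2\<close> with respect to their first argument.\<close>
definition Fop where
  "Fop R eps1 eps2 g1 g2 dD1 dD2 = (\<lambda>(\<pi>1, \<pi>2, p1, p2).
     (- (fst R *v p1) + eps1 *\<^sub>R g1 \<pi>1,
      - (snd R *v p2) + eps2 *\<^sub>R g2 \<pi>2,
      transpose (fst R) *v \<pi>1 + dD1 p1 \<pi>2,
      transpose (snd R) *v \<pi>2 + dD2 p2 \<pi>1))"

definition strongly_monotone_game where
  "strongly_monotone_game \<alpha> R eps1 eps2 g1 g2 dD1 dD2 \<longleftrightarrow>
     (\<forall>z\<in>Zset. \<forall>z'\<in>Zset.
        (z - z') \<bullet> (Fop R eps1 eps2 g1 g2 dD1 dD2 z - Fop R eps1 eps2 g1 g2 dD1 dD2 z')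
          \<ge> \<alpha> * (norm (z - z'))\<^sup>2)"

end

theory Submission
  imports Defs
begin

text \<open>Both equilibria solve the variational inequality of their gradient operator: the
  first-order condition of each player's minimisation over the convex simplex.  Testing
  the inequality for \<open>z\<^sup>*\<close> at \<open>z\<^sup>\<dagger>\<close> and vice versa and combining with strong
  monotonicity of \<open>F(\<cdot>;R')\<close> gives
  \<open>\<alpha> \<parallel>z\<^sup>* - z\<^sup>\<dagger>\<parallel>\<^sup>2 \<le> (z\<^sup>* - z\<^sup>\<dagger>) \<bullet> (F(z\<^sup>*;R') - F(z\<^sup>*;R))\<close>.  The regularisers cancel in
  \<open>F(z\<^sup>*;R') - F(z\<^sup>*;R)\<close>, leaving four payoff terms \<open>(R - R') x\<close> with \<open>x\<close> in a simplex,
  each of norm at most \<open>\<surd>|\<A>\<^sub>i| \<parallel>R - R'\<parallel>\<^sub>\<infinity>\<close>.\<close>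

lemma convex_prob_simplex: "convex (prob_simplex :: (real ^ 'n::finite) set)"
  unfolding convex_def prob_simplex_def
  by (auto simp: sum.distrib sum_distrib_left[symmetric])

lemma abs_entry_le_maxabs: "\<bar>A $ i $ j\<bar> \<le> maxabs A"
proof -
  have "{\<bar>A $ i $ j\<bar> | i j. True} = (\<lambda>(i, j). \<bar>A $ i $ j\<bar>) ` UNIV" by auto
  then show ?thesis unfolding maxabs_def by (intro Max_ge) auto
qed

lemma norm_matrix_vector_mult_prob_simplex_le:
  fixes A :: "real ^ 'n::finite ^ 'm::finite"
  assumes A: "\<And>i j. \<bar>A $ i $ j\<bar> \<le> M" and x: "x \<in> prob_simplex"
  shows "norm (A *v x) \<le> sqrt (real CARD('m)) * M"
proof -
  have x_nonneg: "\<And>j. 0 \<le> x $ j" and x_sum: "(\<Sum>j\<in>UNIV. x $ j) = 1"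
    using x by (auto simp: prob_simplex_def)
  have entry: "\<bar>(A *v x) $ i\<bar> \<le> M" for i
  proof -
    have "\<bar>(A *v x) $ i\<bar> \<le> (\<Sum>j\<in>UNIV. \<bar>A $ i $ j * x $ j\<bar>)"
      unfolding matrix_vector_mult_def by (simp add: sum_abs)
    also have "\<dots> \<le> (\<Sum>j\<in>UNIV. M * x $ j)"
      by (intro sum_mono) (simp add: abs_mult x_nonneg mult_right_mono A)
    also have "\<dots> = M" by (simp add: sum_distrib_left[symmetric] x_sum)
    finally show ?thesis .
  qed
  then have "0 \<le> M" by (meson abs_ge_zero order_trans)
  have "norm (A *v x) = sqrt (\<Sum>i\<in>UNIV. ((A *v x) $ i)\<^sup>2)"
    by (simp add: norm_vec_def L2_set_def)
  also have "\<dots> \<le> sqrt (\<Sum>i::'m\<in>UNIV. M\<^sup>2)"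
    by (intro real_sqrt_le_mono sum_mono) (metis abs_ge_zero entry power2_abs power_mono)
  also have "\<dots> = sqrt (real CARD('m)) * M" using \<open>0 \<le> M\<close> by (simp add: real_sqrt_mult)
  finally show ?thesis .
qed

lemma convex_minimum_first_order:
  fixes f :: "'a::real_inner \<Rightarrow> real"
  assumes deriv: "(f has_derivative (\<lambda>h. g \<bullet> h)) (at x)"
    and S: "convex S" "x \<in> S" "y \<in> S" and min: "\<forall>y\<in>S. f x \<le> f y"
  shows "0 \<le> g \<bullet> (y - x)"
proof (rule ccontr)
  assume "\<not> ?thesis"
  then have neg: "g \<bullet> (y - x) < 0" by simp
  have "((\<lambda>t. x + t *\<^sub>R (y - x)) has_derivative (\<lambda>t. t *\<^sub>R (y - x))) (at 0)"
    by (auto intro!: derivative_eq_intros)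
  from has_derivative_compose[OF this, of f "\<lambda>h. g \<bullet> h"] deriv
  have "((\<lambda>t. f (x + t *\<^sub>R (y - x))) has_derivative (\<lambda>t. g \<bullet> (y - x) * t)) (at 0)"
    by (simp add: o_def mult.commute)
  then have "((\<lambda>t. f (x + t *\<^sub>R (y - x))) has_real_derivative g \<bullet> (y - x)) (at 0)"
    by (simp add: has_field_derivative_def)
  from DERIV_neg_dec_right[OF this neg] obtain e where "e > 0"
    and dec: "\<And>h. 0 < h \<Longrightarrow> h < e \<Longrightarrow> f (x + h *\<^sub>R (y - x)) < f x" by auto
  define h where "h = min (e / 2) 1"
  have h: "0 < h" "h < e" "h \<le> 1" using \<open>e > 0\<close> by (auto simp: h_def)
  have "x + h *\<^sub>R (y - x) = (1 - h) *\<^sub>R x + h *\<^sub>R y" by (simp add: algebra_simps)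
  also have "\<dots> \<in> S" using convexD[OF S, of "1 - h" h] h by simp
  finally have "f x \<le> f (x + h *\<^sub>R (y - x))" using min by blast
  with dec[OF h(1,2)] show False by simp
qed

lemma convex_minimum_linear_plus_first_order:
  fixes f :: "'a::real_inner \<Rightarrow> real"
  assumes "(f has_derivative (\<lambda>h. g \<bullet> h)) (at x)"
    and "convex S" "x \<in> S" "y \<in> S" and "\<forall>y\<in>S. c \<bullet> x + f x \<le> c \<bullet> y + f y"
  shows "0 \<le> (c + g) \<bullet> (y - x)"
  using assms
  by (intro convex_minimum_first_order[of "\<lambda>x. c \<bullet> x + f x"])
     (auto intro!: derivative_eq_intros simp: inner_add_left)

lemma modified_NE_variational_inequality:
  fixes R :: "(real ^ 'a2::finite ^ 'a1::finite) \<times> (real ^ 'a1 ^ 'a2)"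
    and z z' :: "(real ^ 'a1) \<times> (real ^ 'a2) \<times> (real ^ 'a2) \<times> (real ^ 'a1)"
    and D1 :: "real ^ 'a2 \<Rightarrow> real ^ 'a2 \<Rightarrow> real"
    and D2 :: "real ^ 'a1 \<Rightarrow> real ^ 'a1 \<Rightarrow> real"
  assumes g1: "\<And>x. x \<in> prob_simplex \<Longrightarrow> (nu1 has_derivative (\<lambda>h. g1 x \<bullet> h)) (at x)"
    and g2: "\<And>x. x \<in> prob_simplex \<Longrightarrow> (nu2 has_derivative (\<lambda>h. g2 x \<bullet> h)) (at x)"
    and dD1: "\<And>p q. p \<in> prob_simplex \<Longrightarrow> q \<in> prob_simplex \<Longrightarrow>
      ((\<lambda>x. D1 x q) has_derivative (\<lambda>h. dD1 p q \<bullet> h)) (at p)"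
    and dD2: "\<And>p q. p \<in> prob_simplex \<Longrightarrow> q \<in> prob_simplex \<Longrightarrow>
      ((\<lambda>x. D2 x q) has_derivative (\<lambda>h. dD2 p q \<bullet> h)) (at p)"
    and NE: "modified_NE R D1 D2 eps1 eps2 nu1 nu2 z" and "z' \<in> Zset"
  shows "0 \<le> (z' - z) \<bullet> Fop R eps1 eps2 g1 g2 dD1 dD2 z"
proof -
  obtain \<pi>1 \<pi>2 p1 p2 where z: "z = (\<pi>1, \<pi>2, p1, p2)" by (cases z) auto
  obtain \<pi>1' \<pi>2' p1' p2' where z': "z' = (\<pi>1', \<pi>2', p1', p2')" by (cases z') auto
  obtain R1 R2 where R: "R = (R1, R2)" by (cases R) auto
  have in_z: "\<pi>1 \<in> prob_simplex" "\<pi>2 \<in> prob_simplex" "p1 \<in> prob_simplex" "p2 \<in> prob_simplex"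
    using NE by (auto simp: modified_NE_def z Zset_def)
  have in_z': "\<pi>1' \<in> prob_simplex" "\<pi>2' \<in> prob_simplex" "p1' \<in> prob_simplex" "p2' \<in> prob_simplex"
    using \<open>z' \<in> Zset\<close> by (auto simp: z' Zset_def)
  have min1: "\<forall>x\<in>prob_simplex.
      - (R1 *v p1) \<bullet> \<pi>1 + eps1 * nu1 \<pi>1 \<le> - (R1 *v p1) \<bullet> x + eps1 * nu1 x"
    using NE by (auto simp: modified_NE_def z R J1_def inner_commute)
  have min2: "\<forall>x\<in>prob_simplex.
      - (R2 *v p2) \<bullet> \<pi>2 + eps2 * nu2 \<pi>2 \<le> - (R2 *v p2) \<bullet> x + eps2 * nu2 x"
    using NE by (auto simp: modified_NE_def z R J2_def inner_commute)
  have min3: "\<forall>x\<in>prob_simplex.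
      (transpose R1 *v \<pi>1) \<bullet> p1 + D1 p1 \<pi>2 \<le> (transpose R1 *v \<pi>1) \<bullet> x + D1 x \<pi>2"
    using NE by (auto simp: modified_NE_def z R Jbar1_def dot_lmul_matrix)
  have min4: "\<forall>x\<in>prob_simplex.
      (transpose R2 *v \<pi>2) \<bullet> p2 + D2 p2 \<pi>1 \<le> (transpose R2 *v \<pi>2) \<bullet> x + D2 x \<pi>1"
    using NE by (auto simp: modified_NE_def z R Jbar2_def dot_lmul_matrix)
  have "((\<lambda>x. eps1 * nu1 x) has_derivative (\<lambda>h. (eps1 *\<^sub>R g1 \<pi>1) \<bullet> h)) (at \<pi>1)"
    using g1[OF in_z(1)] by (auto intro!: derivative_eq_intros)
  from convex_minimum_linear_plus_first_order[OF this convex_prob_simplex in_z(1) in_z'(1) min1]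
  have vi1: "0 \<le> (- (R1 *v p1) + eps1 *\<^sub>R g1 \<pi>1) \<bullet> (\<pi>1' - \<pi>1)" .
  have "((\<lambda>x. eps2 * nu2 x) has_derivative (\<lambda>h. (eps2 *\<^sub>R g2 \<pi>2) \<bullet> h)) (at \<pi>2)"
    using g2[OF in_z(2)] by (auto intro!: derivative_eq_intros)
  from convex_minimum_linear_plus_first_order[OF this convex_prob_simplex in_z(2) in_z'(2) min2]
  have vi2: "0 \<le> (- (R2 *v p2) + eps2 *\<^sub>R g2 \<pi>2) \<bullet> (\<pi>2' - \<pi>2)" .
  from convex_minimum_linear_plus_first_order
      [OF dD1[OF in_z(3,2)] convex_prob_simplex in_z(3) in_z'(3) min3]
  have vi3: "0 \<le> (transpose R1 *v \<pi>1 + dD1 p1 \<pi>2) \<bullet> (p1' - p1)" .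
  from convex_minimum_linear_plus_first_order
      [OF dD2[OF in_z(4,1)] convex_prob_simplex in_z(4) in_z'(4) min4]
  have vi4: "0 \<le> (transpose R2 *v \<pi>2 + dD2 p2 \<pi>1) \<bullet> (p2' - p2)" .
  show ?thesis
    using vi1 vi2 vi3 vi4 by (simp add: z z' R Fop_def inner_commute)
qed

lemma strongly_monotone_variational_solutions_dist_le:
  fixes F G :: "'a::real_inner \<Rightarrow> 'a"
  assumes "\<alpha> > 0"
    and F_z: "0 \<le> (w - z) \<bullet> F z" and G_w: "0 \<le> (z - w) \<bullet> G w"
    and mono: "\<alpha> * (norm (z - w))\<^sup>2 \<le> (z - w) \<bullet> (G z - G w)"
  shows "norm (z - w) \<le> norm (G z - F z) / \<alpha>"
proof -
  have "(w - z) \<bullet> F z = - ((z - w) \<bullet> F z)"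
    by (metis inner_minus_left minus_diff_eq)
  then have "\<alpha> * (norm (z - w))\<^sup>2 \<le> (z - w) \<bullet> (G z - F z)"
    using F_z G_w mono by (simp add: inner_diff_right)
  also have "\<dots> \<le> norm (z - w) * norm (G z - F z)" by (rule norm_cauchy_schwarz)
  finally have "norm (z - w) * (\<alpha> * norm (z - w)) \<le> norm (z - w) * norm (G z - F z)"
    by (simp add: power2_eq_square algebra_simps)
  then have "\<alpha> * norm (z - w) \<le> norm (G z - F z)"
    by (cases "norm (z - w) = 0") (auto simp: mult_le_cancel_left)
  with \<open>\<alpha> > 0\<close> show ?thesis by (simp add: field_simps)
qed

lemma transpose_diff: "transpose (A - B) = transpose A - transpose (B :: 'a::ab_group_add ^ 'n ^ 'm)"
  by (simp add: transpose_def vec_eq_iff)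

lemma Fop_diff_payoffs:
  fixes R R' :: "(real ^ 'a2::finite ^ 'a1::finite) \<times> (real ^ 'a1 ^ 'a2)"
  shows "Fop R' eps1 eps2 g1 g2 dD1 dD2 (\<pi>1, \<pi>2, p1, p2)
      - Fop R eps1 eps2 g1 g2 dD1 dD2 (\<pi>1, \<pi>2, p1, p2) =
    (- ((fst R' - fst R) *v p1), - ((snd R' - snd R) *v p2),
     transpose (fst R' - fst R) *v \<pi>1, transpose (snd R' - snd R) *v \<pi>2)"
  by (simp add: Fop_def transpose_diff matrix_vector_mult_diff_rdistrib)

lemma abs_payoff_diff_le_payoff_dist:
  "\<bar>(fst R' - fst R) $ i $ j\<bar> \<le> payoff_dist R R'" "\<bar>(snd R' - snd R) $ k $ l\<bar> \<le> payoff_dist R R'"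
  using abs_entry_le_maxabs[of "fst R - fst R'" i j] abs_entry_le_maxabs[of "snd R - snd R'" k l]
  by (auto simp: payoff_dist_def abs_minus_commute)

lemma norm_Fop_diff_le:
  fixes R R' :: "(real ^ 'a2::finite ^ 'a1::finite) \<times> (real ^ 'a1 ^ 'a2)"
  assumes "z \<in> Zset"
  shows "norm (Fop R' eps1 eps2 g1 g2 dD1 dD2 z - Fop R eps1 eps2 g1 g2 dD1 dD2 z)
    \<le> 2 * (sqrt (real CARD('a1)) + sqrt (real CARD('a2))) * payoff_dist R R'"
proof -
  obtain \<pi>1 \<pi>2 p1 p2 where z: "z = (\<pi>1, \<pi>2, p1, p2)" by (cases z) auto
  have in_z: "\<pi>1 \<in> prob_simplex" "\<pi>2 \<in> prob_simplex" "p1 \<in> prob_simplex" "p2 \<in> prob_simplex"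
    using assms by (auto simp: z Zset_def)
  let ?P = "payoff_dist R R'" and ?A1 = "fst R' - fst R" and ?A2 = "snd R' - snd R"
  have transpose_entries: "\<bar>transpose ?A1 $ i $ j\<bar> \<le> ?P" "\<bar>transpose ?A2 $ k $ l\<bar> \<le> ?P" for i j k l
    using abs_payoff_diff_le_payoff_dist(1)[of R' R j i] abs_payoff_diff_le_payoff_dist(2)[of R' R l k]
    by (simp_all only: transpose_def vec_lambda_beta)
  have "norm (Fop R' eps1 eps2 g1 g2 dD1 dD2 z - Fop R eps1 eps2 g1 g2 dD1 dD2 z)
      \<le> norm (?A1 *v p1) + norm (?A2 *v p2) + norm (transpose ?A1 *v \<pi>1) + norm (transpose ?A2 *v \<pi>2)"
    unfolding z Fop_diff_payoffs by (smt (verit) norm_Pair_le norm_minus_cancel)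
  also have "\<dots> \<le> sqrt (real CARD('a1)) * ?P + sqrt (real CARD('a2)) * ?P
      + sqrt (real CARD('a2)) * ?P + sqrt (real CARD('a1)) * ?P"
    using abs_payoff_diff_le_payoff_dist transpose_entries
    by (intro add_mono norm_matrix_vector_mult_prob_simplex_le in_z)
  finally show ?thesis by (simp add: algebra_simps)
qed

theorem theorem1:
  fixes R R' :: "(real ^ 'a2::finite ^ 'a1::finite) \<times> (real ^ 'a1 ^ 'a2)"
    and eps1 eps2 \<alpha> :: real
    and nu1 :: "real ^ 'a1 \<Rightarrow> real" and g1 :: "real ^ 'a1 \<Rightarrow> real ^ 'a1"
    and nu2 :: "real ^ 'a2 \<Rightarrow> real" and g2 :: "real ^ 'a2 \<Rightarrow> real ^ 'a2"
    and S1 :: "(real ^ 'a1) set" and S2 :: "(real ^ 'a2) set"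
    and D1 :: "real ^ 'a2 \<Rightarrow> real ^ 'a2 \<Rightarrow> real"
    and dD1 :: "real ^ 'a2 \<Rightarrow> real ^ 'a2 \<Rightarrow> real ^ 'a2"
    and D2 :: "real ^ 'a1 \<Rightarrow> real ^ 'a1 \<Rightarrow> real"
    and dD2 :: "real ^ 'a1 \<Rightarrow> real ^ 'a1 \<Rightarrow> real ^ 'a1"
    and U1 :: "((real ^ 'a2) \<times> (real ^ 'a2)) set" and U2 :: "((real ^ 'a1) \<times> (real ^ 'a1)) set"
    and zs zd :: "(real ^ 'a1) \<times> (real ^ 'a2) \<times> (real ^ 'a2) \<times> (real ^ 'a1)"
  assumes eps1: "eps1 > 0" and eps2: "eps2 > 0"
    and S1: "open S1" "prob_simplex \<subseteq> S1" "strict_convex_on S1 nu1"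
    and g1: "\<And>x. x \<in> S1 \<Longrightarrow> (nu1 has_derivative (\<lambda>h. g1 x \<bullet> h)) (at x)"
    and S2: "open S2" "prob_simplex \<subseteq> S2" "strict_convex_on S2 nu2"
    and g2: "\<And>x. x \<in> S2 \<Longrightarrow> (nu2 has_derivative (\<lambda>h. g2 x \<bullet> h)) (at x)"
    and U1: "open U1" "prob_simplex \<times> prob_simplex \<subseteq> U1"
      "\<And>w. w \<in> U1 \<Longrightarrow> (\<lambda>(p, q). D1 p q) differentiable (at w)"
    and dD1: "\<And>p q. (p, q) \<in> U1 \<Longrightarrow> ((\<lambda>x. D1 x q) has_derivative (\<lambda>h. dD1 p q \<bullet> h)) (at p)"
    and cvx1: "\<And>q. q \<in> prob_simplex \<Longrightarrow> convex_on prob_simplex (\<lambda>p. D1 p q)"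
    and U2: "open U2" "prob_simplex \<times> prob_simplex \<subseteq> U2"
      "\<And>w. w \<in> U2 \<Longrightarrow> (\<lambda>(p, q). D2 p q) differentiable (at w)"
    and dD2: "\<And>p q. (p, q) \<in> U2 \<Longrightarrow> ((\<lambda>x. D2 x q) has_derivative (\<lambda>h. dD2 p q \<bullet> h)) (at p)"
    and cvx2: "\<And>q. q \<in> prob_simplex \<Longrightarrow> convex_on prob_simplex (\<lambda>p. D2 p q)"
    and alpha: "\<alpha> > 0"
    and mono: "strongly_monotone_game \<alpha> R' eps1 eps2 g1 g2 dD1 dD2"
    and NE: "modified_NE R D1 D2 eps1 eps2 nu1 nu2 zs"
    and NE': "modified_NE R' D1 D2 eps1 eps2 nu1 nu2 zd"
  shows "norm (zs - zd)
           \<le> 2 * (sqrt (real CARD('a1)) + sqrt (real CARD('a2))) * payoff_dist R R' / \<alpha>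
     \<and> norm ((fst zs, fst (snd zs)) - (fst zd, fst (snd zd)))
           \<le> 2 * (sqrt (real CARD('a1)) + sqrt (real CARD('a2))) * payoff_dist R R' / \<alpha>"
proof -
  let ?bound = "2 * (sqrt (real CARD('a1)) + sqrt (real CARD('a2))) * payoff_dist R R' / \<alpha>"
  have VI: "0 \<le> (z' - z) \<bullet> Fop Q eps1 eps2 g1 g2 dD1 dD2 z"
    if "modified_NE Q D1 D2 eps1 eps2 nu1 nu2 z" "z' \<in> Zset" for Q z z'
    using that S1(2) S2(2) U1(2) U2(2)
    by (intro modified_NE_variational_inequality) (auto intro: g1 g2 dD1 dD2)
  have in_Z: "zs \<in> Zset" "zd \<in> Zset"
    using NE NE' by (auto simp: modified_NE_def split: prod.splits)
  have "norm (zs - zd) \<le> norm (Fop R' eps1 eps2 g1 g2 dD1 dD2 zs - Fop R eps1 eps2 g1 g2 dD1 dD2 zs) / \<alpha>"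
    using mono in_Z unfolding strongly_monotone_game_def
    by (intro strongly_monotone_variational_solutions_dist_le[where F = "Fop R eps1 eps2 g1 g2 dD1 dD2"]
        alpha VI[OF NE in_Z(2)] VI[OF NE' in_Z(1)]) auto
  also have "\<dots> \<le> ?bound"
    using norm_Fop_diff_le[OF in_Z(1)] alpha by (simp add: divide_right_mono)
  finally have "norm (zs - zd) \<le> ?bound" .
  moreover have "norm ((fst zs, fst (snd zs)) - (fst zd, fst (snd zd))) \<le> norm (zs - zd)"
    by (cases zs, cases zd) (simp add: norm_Pair)
  ultimately show ?thesis by linarith
qed

end
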